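(* If $T$ is a tournament and $T$ is a subdigraph of an oriented graph $D$, then for any minimum hull set $S$ of $D$ in the two-path convexity, $|S\cap V(T)|\leq 2$.
   Context: A tournament is an orientation of a complete graph; an oriented graph is an orientation of a finite simple graph. The two-path interval function on $D$ is $I_{P_3}(u,v)=\{u,v\}$ together with all vertices $w$ with $(u,w),(w,v)\in A(D)$ or $(v,w),(w,u)\in A(D)$. For $S\subseteq V(D)$, $I_{P_3}(S)=\bigcup_{u,v\in S}I_{P_3}(u,v)$; $C$ is convex if $I_{P_3}(C)=C$; the convex hull of $S$ is the smallest convex set containing $S$; a hull set is a set whose convex hull is $V(D)$, and a minimum hull set is one of minimum size. *)

theory Defs
  imports Main
begin

definition oriented_graph :: "'a set \<Rightarrow> ('a \<times> 'a) set \<Rightarrow> bool" where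
  "oriented_graph V A \<longleftrightarrow> finite V \<and> A \<subseteq> V \<times> V \<and>
     (\<forall>u. (u, u) \<notin> A) \<and> (\<forall>u v. (u, v) \<in> A \<longrightarrow> (v, u) \<notin> A)"

definition tournament :: "'a set \<Rightarrow> ('a \<times> 'a) set \<Rightarrow> bool" where
  "tournament V A \<longleftrightarrow> oriented_graph V A \<and>
     (\<forall>u\<in>V. \<forall>v\<in>V. u \<noteq> v \<longrightarrow> (u, v) \<in> A \<or> (v, u) \<in> A)"

definition subdigraph :: "'a set \<Rightarrow> ('a \<times> 'a) set \<Rightarrow> 'a set \<Rightarrow> ('a \<times> 'a) set \<Rightarrow> bool" where
  "subdigraph W B V A \<longleftrightarrow> W \<subseteq> V \<and> B \<subseteq> A \<and> B \<subseteq> W \<times> W"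

definition P3_interval :: "('a \<times> 'a) set \<Rightarrow> 'a \<Rightarrow> 'a \<Rightarrow> 'a set" where
  "P3_interval A u v = {u, v} \<union>
     {w. ((u, w) \<in> A \<and> (w, v) \<in> A) \<or> ((v, w) \<in> A \<and> (w, u) \<in> A)}"

definition P3_interval_set :: "('a \<times> 'a) set \<Rightarrow> 'a set \<Rightarrow> 'a set" where
  "P3_interval_set A S = (\<Union>u\<in>S. \<Union>v\<in>S. P3_interval A u v)"

definition P3_convex :: "('a \<times> 'a) set \<Rightarrow> 'a set \<Rightarrow> bool" where
  "P3_convex A C \<longleftrightarrow> P3_interval_set A C = C"

definition P3_hull :: "'a set \<Rightarrow> ('a \<times> 'a) set \<Rightarrow> 'a set \<Rightarrow> 'a set" where
  "P3_hull V A S = \<Inter>{C. C \<subseteq> V \<and> S \<subseteq> C \<and> P3_convex A C}"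

definition P3_hull_set :: "'a set \<Rightarrow> ('a \<times> 'a) set \<Rightarrow> 'a set \<Rightarrow> bool" where
  "P3_hull_set V A S \<longleftrightarrow> S \<subseteq> V \<and> P3_hull V A S = V"

definition P3_min_hull_set :: "'a set \<Rightarrow> ('a \<times> 'a) set \<Rightarrow> 'a set \<Rightarrow> bool" where
  "P3_min_hull_set V A S \<longleftrightarrow> P3_hull_set V A S \<and>
     (\<forall>S'. P3_hull_set V A S' \<longrightarrow> card S \<le> card S')"

end

theory Submission
  imports Defs
begin

text \<open>Among three pairwise adjacent vertices of an oriented graph, one always lies on a two-path
  between the other two. Such a vertex is redundant in a hull set, since every convex set containing
  the other two contains it. Hence a minimum hull set meets every clique of the underlying graph,
  in particular the vertex set of a tournament, in at most two vertices.\<close>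

lemma P3_interval_triangle:
  assumes "(x, y) \<in> A \<or> (y, x) \<in> A" "(x, z) \<in> A \<or> (z, x) \<in> A" "(y, z) \<in> A \<or> (z, y) \<in> A"
  shows "x \<in> P3_interval A y z \<or> y \<in> P3_interval A x z \<or> z \<in> P3_interval A x y"
  using assms unfolding P3_interval_def
  by (cases "(x, y) \<in> A"; cases "(x, z) \<in> A"; cases "(y, z) \<in> A") simp_all

lemma P3_convex_interval_subset:
  assumes "P3_convex A C" "u \<in> C" "v \<in> C"
  shows "P3_interval A u v \<subseteq> C"
  using assms unfolding P3_convex_def P3_interval_set_def by blast

lemma P3_hull_Diff_interval_vertex:
  assumes "m \<in> P3_interval A p q" "p \<in> S - {m}" "q \<in> S - {m}"
  shows "P3_hull V A (S - {m}) = P3_hull V A S"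
proof -
  have "S \<subseteq> C" if "S - {m} \<subseteq> C" "P3_convex A C" for C
    using that assms P3_convex_interval_subset[of A C p q] by blast
  then have "{C. C \<subseteq> V \<and> S - {m} \<subseteq> C \<and> P3_convex A C} = {C. C \<subseteq> V \<and> S \<subseteq> C \<and> P3_convex A C}"
    by blast
  then show ?thesis
    unfolding P3_hull_def by simp
qed

lemma P3_min_hull_set_finite:
  assumes "P3_min_hull_set V A S" "finite V"
  shows "finite S"
  using assms finite_subset unfolding P3_min_hull_set_def P3_hull_set_def by blast

lemma P3_min_hull_set_not_in_interval:
  assumes min: "P3_min_hull_set V A S" and "finite V"
    and "m \<in> S" "p \<in> S" "q \<in> S" "m \<noteq> p" "m \<noteq> q"
  shows "m \<notin> P3_interval A p q"
proof
  assume "m \<in> P3_interval A p q"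
  then have "P3_hull V A (S - {m}) = P3_hull V A S"
    using assms by (intro P3_hull_Diff_interval_vertex) auto
  with min have "P3_hull_set V A (S - {m})"
    unfolding P3_min_hull_set_def P3_hull_set_def by auto
  with min have "card S \<le> card (S - {m})"
    unfolding P3_min_hull_set_def by blast
  moreover have "card (S - {m}) < card S"
    using P3_min_hull_set_finite[OF min \<open>finite V\<close>] \<open>m \<in> S\<close> by (rule card_Diff1_less)
  ultimately show False
    by simp
qed

lemma obtain_three_distinct:
  assumes "finite X" "2 < card X"
  obtains x y z where "x \<in> X" "y \<in> X" "z \<in> X" "x \<noteq> y" "x \<noteq> z" "y \<noteq> z"
proof -
  obtain T where "T \<subseteq> X" "card T = 3"
    using obtain_subset_with_card_n[of 3 X] assms(2) by auto
  then show ?thesis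
    using that unfolding card_3_iff by blast
qed

lemma P3_min_hull_set_clique_card_le_2:
  assumes min: "P3_min_hull_set V A S" and "finite V"
    and clique: "\<And>u v. u \<in> K \<Longrightarrow> v \<in> K \<Longrightarrow> u \<noteq> v \<Longrightarrow> (u, v) \<in> A \<or> (v, u) \<in> A"
  shows "card (S \<inter> K) \<le> 2"
proof (rule ccontr)
  assume "\<not> card (S \<inter> K) \<le> 2"
  moreover have "finite (S \<inter> K)"
    using P3_min_hull_set_finite[OF min \<open>finite V\<close>] by blast
  ultimately obtain x y z where xyz: "x \<in> S \<inter> K" "y \<in> S \<inter> K" "z \<in> S \<inter> K" "x \<noteq> y" "x \<noteq> z" "y \<noteq> z"
    using obtain_three_distinct by (metis not_le)
  then have "x \<in> P3_interval A y z \<or> y \<in> P3_interval A x z \<or> z \<in> P3_interval A x y"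
    using clique by (intro P3_interval_triangle) auto
  with xyz show False
    using P3_min_hull_set_not_in_interval[OF min \<open>finite V\<close>] by blast
qed

theorem corollary3:
  fixes V W :: "'a set" and A B :: "('a \<times> 'a) set" and S :: "'a set"
  assumes "oriented_graph V A"
    and "tournament W B"
    and "subdigraph W B V A"
    and "P3_min_hull_set V A S"
  shows "card (S \<inter> W) \<le> 2"
proof (rule P3_min_hull_set_clique_card_le_2[OF assms(4)])
  show "finite V"
    using assms(1) unfolding oriented_graph_def by blast
  show "(u, v) \<in> A \<or> (v, u) \<in> A" if "u \<in> W" "v \<in> W" "u \<noteq> v" for u v
    using assms(2,3) that unfolding tournament_def subdigraph_def by blast
qed

end
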